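(* Let $G$ be a group with the unique root property. Suppose that for infinitely many primes $p$ there exist a normal subgroup $H$ of index $p$ in $G$ and an automorphism of $H$ that does not extend to an automorphism of $G$. Then the abstract commensurator $\mathrm{Comm}(G)$ is not finitely generated.
   Context: A group $G$ has the unique root property if for all $x,y\in G$ and every positive integer $n$, $x^n=y^n$ implies $x=y$. The abstract commensurator $\mathrm{Comm}(G)$ is the group of equivalence classes of isomorphisms between finite-index subgroups of $G$, two such isomorphisms being equivalent if they agree on some finite-index subgroup of $G$ on which both are defined; the product of $\alpha:G_1\to G_1'$ and $\beta:G_2\to G_2'$ is $\alpha\beta:\alpha^{-1}(G_1'\cap G_2)\to\beta(G_1'\cap G_2)$. *)

theory Defs
  imports "HOL-Algebra.Algebra" "HOL-Computational_Algebra.Primes"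
begin

definition unique_root :: "('a, 'b) monoid_scheme \<Rightarrow> bool" where
  "unique_root G \<longleftrightarrow> (\<forall>x\<in>carrier G. \<forall>y\<in>carrier G. \<forall>n::nat. n > 0 \<longrightarrow>
      x [^]\<^bsub>G\<^esub> n = y [^]\<^bsub>G\<^esub> n \<longrightarrow> x = y)"

definition fin_index_subgroup :: "('a, 'b) monoid_scheme \<Rightarrow> 'a set \<Rightarrow> bool" where
  "fin_index_subgroup G H \<longleftrightarrow> subgroup H G \<and> finite (rcosets\<^bsub>G\<^esub> H)"

definition comm_isos :: "('a, 'b) monoid_scheme \<Rightarrow> ('a set \<times> 'a set \<times> ('a \<Rightarrow> 'a)) set" where
  "comm_isos G = {(A, B, f). fin_index_subgroup G A \<and> fin_index_subgroup G B \<and>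
      f \<in> iso (G\<lparr>carrier := A\<rparr>) (G\<lparr>carrier := B\<rparr>)}"

definition comm_rel :: "('a, 'b) monoid_scheme \<Rightarrow>
    (('a set \<times> 'a set \<times> ('a \<Rightarrow> 'a)) \<times> ('a set \<times> 'a set \<times> ('a \<Rightarrow> 'a))) set" where
  "comm_rel G = {((A, B, f), (A', B', f')).
      (A, B, f) \<in> comm_isos G \<and> (A', B', f') \<in> comm_isos G \<and>
      (\<exists>K. fin_index_subgroup G K \<and> K \<subseteq> A \<and> K \<subseteq> A' \<and> (\<forall>x\<in>K. f x = f' x))}"

definition comm_comp :: "'a set \<times> 'a set \<times> ('a \<Rightarrow> 'a) \<Rightarrow> 'a set \<times> 'a set \<times> ('a \<Rightarrow> 'a)
    \<Rightarrow> 'a set \<times> 'a set \<times> ('a \<Rightarrow> 'a)" where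
  "comm_comp \<alpha> \<beta> = (case \<alpha> of (A, B, f) \<Rightarrow> case \<beta> of (A', B', g) \<Rightarrow>
      ({x \<in> A. f x \<in> B \<inter> A'}, g ` (B \<inter> A'), g \<circ> f))"

definition comm_mult :: "('a, 'b) monoid_scheme \<Rightarrow> ('a set \<times> 'a set \<times> ('a \<Rightarrow> 'a)) set
    \<Rightarrow> ('a set \<times> 'a set \<times> ('a \<Rightarrow> 'a)) set \<Rightarrow> ('a set \<times> 'a set \<times> ('a \<Rightarrow> 'a)) set" where
  "comm_mult G U V = comm_rel G `` {comm_comp a b | a b. a \<in> U \<and> b \<in> V}"

definition Comm :: "('a, 'b) monoid_scheme \<Rightarrow> ('a set \<times> 'a set \<times> ('a \<Rightarrow> 'a)) set monoid" where
  "Comm G = \<lparr> carrier = comm_isos G // comm_rel G,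
      monoid.mult = comm_mult G,
      one = comm_rel G `` {(carrier G, carrier G, (\<lambda>x. x))} \<rparr>"

definition finitely_generated_group :: "('a, 'b) monoid_scheme \<Rightarrow> bool" where
  "finitely_generated_group G \<longleftrightarrow>
     (\<exists>S. finite S \<and> S \<subseteq> carrier G \<and> generate G S = carrier G)"

end

theory Submission
  imports Defs
begin

text \<open>
  Suppose \<open>Comm G\<close> were generated by finitely many classes. Call a subgroup \<open>A\<close>
  \<open>p\<close>-full (\<open>coprime_powers_in p A\<close>) if every element of \<open>G\<close> has a power with
  exponent prime to \<open>p\<close> in \<open>A\<close>.
  Subgroups of index less than \<open>p\<close> are \<open>p\<close>-full, and classes represented by an
  isomorphism between \<open>p\<close>-full subgroups are closed under the group operations of
  \<open>Comm G\<close>; hence for every large prime \<open>p\<close> all of \<open>Comm G\<close> consists of such classes.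

  Now let \<open>H\<close> be normal of index \<open>p\<close> and \<open>\<phi>\<close> an automorphism of \<open>H\<close>, commensurable
  with some \<open>\<psi> : A \<rightarrow> B\<close> between \<open>p\<close>-full subgroups. Unique roots upgrade agreement on a
  finite-index subgroup to agreement of \<open>\<phi>\<close> and \<open>\<psi>\<close> on \<open>H \<inter> A\<close>, and to
  \<open>\<phi> (a h a\<inverse>) = \<psi> a \<phi> h (\<psi> a)\<inverse>\<close>. As \<open>A\<close> is \<open>p\<close>-full and \<open>G/H\<close> has order \<open>p\<close>,
  \<open>G = H A\<close>, and \<open>h a \<mapsto> \<phi> h \<psi> a\<close> is a well-defined automorphism of \<open>G\<close> extending
  \<open>\<phi>\<close>; it is injective since its kernel meets \<open>H\<close> trivially and \<open>p\<close>-th roots are unique.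
\<close>

context group
begin

section \<open>Isomorphisms between subgroups\<close>

lemma subgroup_nat_pow_closed:
  assumes "subgroup H G" "h \<in> H" shows "h [^] (n::nat) \<in> H"
  using subgroup_int_pow_closed[OF assms, of "int n"] by (simp add: int_pow_int)

lemma conj_nat_pow:
  assumes "a \<in> carrier G" "h \<in> carrier G"
  shows "(a \<otimes> h \<otimes> inv a) [^] (n::nat) = a \<otimes> h [^] n \<otimes> inv a"
proof (induction n)
  case 0
  then show ?case using assms by simp
next
  case (Suc n)
  then show ?case using assms by (simp add: m_assoc) (simp add: m_assoc[symmetric])
qed

definition subgroup_iso :: "'a set \<Rightarrow> 'a set \<Rightarrow> ('a \<Rightarrow> 'a) \<Rightarrow> bool" where
  "subgroup_iso A B f \<longleftrightarrow> subgroup A G \<and> subgroup B G \<and> bij_betw f A B \<and>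
     (\<forall>x\<in>A. \<forall>y\<in>A. f (x \<otimes> y) = f x \<otimes> f y)"

lemma iso_subgroups_iff_subgroup_iso:
  assumes "subgroup A G" "subgroup B G"
  shows "f \<in> iso (G\<lparr>carrier := A\<rparr>) (G\<lparr>carrier := B\<rparr>) \<longleftrightarrow> subgroup_iso A B f"
  using assms unfolding subgroup_iso_def iso_def hom_def bij_betw_def by auto

context
  fixes A B f
  assumes f: "subgroup_iso A B f"
begin

lemma subgroup_iso_subgroups: "subgroup A G" "subgroup B G"
  using f unfolding subgroup_iso_def by auto

lemma subgroup_iso_bij_betw: "bij_betw f A B"
  using f unfolding subgroup_iso_def by auto

lemma subgroup_iso_mult: "x \<in> A \<Longrightarrow> y \<in> A \<Longrightarrow> f (x \<otimes> y) = f x \<otimes> f y"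
  using f unfolding subgroup_iso_def by auto

lemma subgroup_iso_closed: "x \<in> A \<Longrightarrow> f x \<in> B"
  using bij_betw_apply[OF subgroup_iso_bij_betw] .

lemma subgroup_iso_carrier: "x \<in> A \<Longrightarrow> f x \<in> carrier G"
  using subgroup_iso_closed subgroup.mem_carrier[OF subgroup_iso_subgroups(2)] by blast

lemma subgroup_iso_group_hom: "group_hom (G\<lparr>carrier := A\<rparr>) G f"
  using subgroup.subgroup_is_group[OF subgroup_iso_subgroups(1) is_group] is_group
    subgroup_iso_carrier subgroup_iso_mult
  by (intro group_hom.intro group_hom_axioms.intro homI) auto

lemma subgroup_iso_one: "f \<one> = \<one>"
  using group_hom.hom_one[OF subgroup_iso_group_hom] by simp

lemma subgroup_iso_inv: "x \<in> A \<Longrightarrow> f (inv x) = inv (f x)"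
  using group_hom.hom_inv[OF subgroup_iso_group_hom, of x]
    m_inv_consistent[OF subgroup_iso_subgroups(1)] by simp

lemma subgroup_iso_nat_pow: "x \<in> A \<Longrightarrow> f (x [^] (n::nat)) = f x [^] n"
  using group_hom.hom_nat_pow[OF subgroup_iso_group_hom, of x n] nat_pow_consistent[of x n A] by simp

lemma subgroup_iso_inv_into: "subgroup_iso B A (inv_into A f)"
proof -
  have bij: "bij_betw (inv_into A f) B A"
    using bij_betw_inv_into[OF subgroup_iso_bij_betw] .
  have "inv_into A f (x \<otimes> y) = inv_into A f x \<otimes> inv_into A f y" if "x \<in> B" "y \<in> B" for x y
  proof -
    have xy: "inv_into A f x \<in> A" "inv_into A f y \<in> A"
      using bij that by (auto dest: bij_betw_apply)
    have "f (inv_into A f x \<otimes> inv_into A f y) = x \<otimes> y"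
      using subgroup_iso_mult[OF xy] that subgroup_iso_bij_betw
      by (simp add: bij_betw_inv_into_right)
    then show ?thesis
      using subgroup_iso_bij_betw subgroup.m_closed[OF subgroup_iso_subgroups(1) xy]
      by (metis bij_betw_inv_into_left)
  qed
  then show ?thesis
    using bij subgroup_iso_subgroups unfolding subgroup_iso_def by blast
qed

lemma subgroup_iso_restrict:
  assumes C: "subgroup C G" "C \<subseteq> A"
  shows "subgroup_iso C (f ` C) f"
proof -
  have "subgroup (f ` C) G"
    using group_hom.subgroup_img_is_subgroup[OF subgroup_iso_group_hom
        subgroup_incl[OF C(1) subgroup_iso_subgroups(1) C(2)]] by simp
  moreover have "bij_betw f C (f ` C)"
    using subgroup_iso_bij_betw C(2) by (meson bij_betw_def bij_betw_subset)
  ultimately show ?thesis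
    using C f unfolding subgroup_iso_def by blast
qed

lemma subgroup_iso_preimage_eq: "C \<subseteq> B \<Longrightarrow> {x\<in>A. f x \<in> C} = inv_into A f ` C"
  using subgroup_iso_bij_betw
  by (auto simp: bij_betw_def bij_betw_inv_into_right inv_into_into
      intro!: image_eqI[where x = "f x" for x])

end

lemma subgroup_iso_comp:
  assumes f: "subgroup_iso A B f" and g: "subgroup_iso B C g"
  shows "subgroup_iso A C (g \<circ> f)"
  using subgroup_iso_subgroups[OF f] subgroup_iso_subgroups[OF g]
    bij_betw_trans[OF subgroup_iso_bij_betw[OF f] subgroup_iso_bij_betw[OF g]]
    subgroup_iso_mult[OF f] subgroup_iso_mult[OF g] subgroup_iso_closed[OF f]
  unfolding subgroup_iso_def by auto

lemma subgroup_iso_preimage: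
  assumes f: "subgroup_iso A B f" and C: "subgroup C G" "C \<subseteq> B"
  shows "subgroup_iso {x\<in>A. f x \<in> C} C f"
proof -
  have "subgroup_iso C (inv_into A f ` C) (inv_into A f)"
    using subgroup_iso_restrict[OF subgroup_iso_inv_into[OF f] C] .
  moreover have "inv_into A f ` C \<subseteq> A"
    using C(2) subgroup_iso_closed[OF subgroup_iso_inv_into[OF f]] by blast
  ultimately have "subgroup_iso (inv_into A f ` C) (f ` inv_into A f ` C) f"
    using subgroup_iso_restrict[OF f] subgroup_iso_subgroups(2) by blast
  moreover have "f ` inv_into A f ` C = C"
    using subgroup_iso_bij_betw[OF f] C(2) by (simp add: bij_betw_def image_inv_into_cancel)
  ultimately show ?thesis
    using subgroup_iso_preimage_eq[OF f C(2)] by simp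
qed

section \<open>Subgroups of finite index\<close>

text \<open>
  Unlike the count of
  cosets in \<open>G\<close> used by \<open>fin_index_subgroup\<close>, it is transported along isomorphisms
  between subgroups.
\<close>

definition finite_index :: "'a set \<Rightarrow> 'a set \<Rightarrow> bool" where
  "finite_index K L \<longleftrightarrow> (\<exists>F. finite F \<and> F \<subseteq> L \<and> (\<forall>l\<in>L. \<exists>t\<in>F. l \<otimes> inv t \<in> K))"

lemma fin_index_subgroup_imp_finite_index:
  assumes "fin_index_subgroup G K"
  shows "finite_index K (carrier G)"
proof -
  have K: "subgroup K G" and fin: "finite (rcosets K)"
    using assms by (auto simp: fin_index_subgroup_def)
  define rep where "rep C = (SOME x. x \<in> carrier G \<and> C = K #> x)" for C
  have rep: "rep C \<in> carrier G \<and> C = K #> rep C" if C: "C \<in> rcosets K" for C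
  proof -
    obtain x where "x \<in> carrier G \<and> C = K #> x"
      using C unfolding RCOSETS_def by auto
    then show ?thesis
      unfolding rep_def by (rule someI)
  qed
  have "\<exists>t\<in>rep ` (rcosets K). g \<otimes> inv t \<in> K" if g: "g \<in> carrier G" for g
  proof -
    have C: "K #> g \<in> rcosets K"
      using g by (rule rcosetsI[OF subgroup.subset[OF K]])
    have "g \<in> K #> rep (K #> g)"
      using rep[OF C] rcos_self[OF g K] by simp
    then have "g \<otimes> inv (rep (K #> g)) \<in> K"
      using subgroup.rcos_module[OF K is_group] rep[OF C] g by blast
    then show ?thesis
      using C by blast
  qed
  moreover have "finite (rep ` (rcosets K))" "rep ` (rcosets K) \<subseteq> carrier G"
    using fin rep by auto
  ultimately show ?thesis
    unfolding finite_index_def by blast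
qed

lemma finite_index_imp_fin_index_subgroup:
  assumes K: "subgroup K G" and "finite_index K (carrier G)"
  shows "fin_index_subgroup G K"
proof -
  obtain F where F: "finite F" "F \<subseteq> carrier G" and cover: "\<forall>g\<in>carrier G. \<exists>t\<in>F. g \<otimes> inv t \<in> K"
    using assms(2) unfolding finite_index_def by blast
  have "rcosets K \<subseteq> (\<lambda>t. K #> t) ` F"
  proof
    fix C assume "C \<in> rcosets K"
    then obtain g where g: "g \<in> carrier G" and C: "C = K #> g"
      unfolding RCOSETS_def by auto
    then obtain t where t: "t \<in> F" "g \<otimes> inv t \<in> K"
      using cover by blast
    then have "g \<in> K #> t"
      using subgroup.rcos_module[OF K is_group] F g by blast
    then have "K #> t = K #> g"
      using repr_independence[OF _ _ K] t F by blast
    then show "C \<in> (\<lambda>t. K #> t) ` F"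
      using C t by blast
  qed
  then show ?thesis
    using K F unfolding fin_index_subgroup_def by (meson finite_imageI finite_subset)
qed

lemma fin_index_subgroup_iff:
  "fin_index_subgroup G K \<longleftrightarrow> subgroup K G \<and> finite_index K (carrier G)"
  using fin_index_subgroup_imp_finite_index finite_index_imp_fin_index_subgroup
  by (auto simp: fin_index_subgroup_def)

lemma finite_index_restrict:
  assumes K: "subgroup K G" and L: "subgroup L G" and fin: "finite_index K (carrier G)"
  shows "finite_index (K \<inter> L) L"
proof -
  obtain F where F: "finite F" "F \<subseteq> carrier G" and cover: "\<forall>g\<in>carrier G. \<exists>x\<in>F. g \<otimes> inv x \<in> K"
    using fin unfolding finite_index_def by blast
  define F' where "F' = {x\<in>F. \<exists>t\<in>L. t \<otimes> inv x \<in> K}"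
  define rep where "rep x = (SOME t. t \<in> L \<and> t \<otimes> inv x \<in> K)" for x
  have rep: "rep x \<in> L" "rep x \<otimes> inv x \<in> K" if "x \<in> F'" for x
    using that unfolding F'_def rep_def by (auto intro: someI2_ex)
  have "\<exists>t\<in>rep ` F'. l \<otimes> inv t \<in> K \<inter> L" if l: "l \<in> L" for l
  proof -
    have lG: "l \<in> carrier G"
      using l subgroup.mem_carrier[OF L] by blast
    then obtain x where x: "x \<in> F" "l \<otimes> inv x \<in> K"
      using cover by blast
    then have x': "x \<in> F'"
      unfolding F'_def using l by blast
    have G: "x \<in> carrier G" "rep x \<in> carrier G"
      using x F rep(1)[OF x'] subgroup.mem_carrier[OF L] by auto
    have "(l \<otimes> inv x) \<otimes> inv (rep x \<otimes> inv x) \<in> K"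
      using x(2) rep(2)[OF x'] K by (simp add: subgroup.m_closed subgroup.m_inv_closed)
    moreover have "(l \<otimes> inv x) \<otimes> inv (rep x \<otimes> inv x) = l \<otimes> inv (rep x)"
      using lG G by (simp add: inv_mult_group m_assoc) (simp add: m_assoc[symmetric])
    ultimately show ?thesis
      using l rep(1)[OF x'] L x' by (auto simp: subgroup.m_closed subgroup.m_inv_closed)
  qed
  moreover have "finite (rep ` F')" "rep ` F' \<subseteq> L"
    using F(1) rep(1) unfolding F'_def by auto
  ultimately show ?thesis
    unfolding finite_index_def by blast
qed

lemma finite_index_trans:
  assumes "L \<subseteq> carrier G" "finite_index K L" "finite_index L (carrier G)"
  shows "finite_index K (carrier G)"
proof -
  obtain T where T: "finite T" "T \<subseteq> L" and KL: "\<forall>l\<in>L. \<exists>t\<in>T. l \<otimes> inv t \<in> K"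
    using assms(2) unfolding finite_index_def by blast
  obtain F where F: "finite F" "F \<subseteq> carrier G" and LG: "\<forall>g\<in>carrier G. \<exists>x\<in>F. g \<otimes> inv x \<in> L"
    using assms(3) unfolding finite_index_def by blast
  have "\<exists>y\<in>(\<lambda>(t, x). t \<otimes> x) ` (T \<times> F). g \<otimes> inv y \<in> K" if g: "g \<in> carrier G" for g
  proof -
    obtain x where x: "x \<in> F" "g \<otimes> inv x \<in> L"
      using LG g by blast
    then obtain t where t: "t \<in> T" "(g \<otimes> inv x) \<otimes> inv t \<in> K"
      using KL by blast
    have G: "t \<in> carrier G" "x \<in> carrier G"
      using t(1) x(1) T(2) F(2) assms(1) by auto
    have "g \<otimes> inv (t \<otimes> x) = (g \<otimes> inv x) \<otimes> inv t"
      using g G by (simp add: inv_mult_group m_assoc)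
    moreover have "t \<otimes> x \<in> (\<lambda>(t, x). t \<otimes> x) ` (T \<times> F)"
      using t(1) x(1) by blast
    ultimately show ?thesis
      using t(2) by metis
  qed
  moreover have "finite ((\<lambda>(t, x). t \<otimes> x) ` (T \<times> F))"
    using T(1) F(1) by simp
  moreover have "(\<lambda>(t, x). t \<otimes> x) ` (T \<times> F) \<subseteq> carrier G"
    using T(2) F(2) assms(1) by auto
  ultimately show ?thesis
    unfolding finite_index_def by blast
qed

lemma finite_index_image:
  assumes f: "subgroup_iso A B f" and fin: "finite_index C A"
  shows "finite_index (f ` C) B"
proof -
  obtain T where T: "finite T" "T \<subseteq> A" and cover: "\<forall>a\<in>A. \<exists>t\<in>T. a \<otimes> inv t \<in> C"
    using fin unfolding finite_index_def by blast
  have "\<exists>s\<in>f ` T. b \<otimes> inv s \<in> f ` C" if "b \<in> B" for b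
  proof -
    obtain a where a: "a \<in> A" "b = f a"
      using \<open>b \<in> B\<close> subgroup_iso_bij_betw[OF f] by (auto simp: bij_betw_def)
    then obtain t where t: "t \<in> T" "a \<otimes> inv t \<in> C"
      using cover by blast
    have "t \<in> A" "inv t \<in> A"
      using t T subgroup.m_inv_closed[OF subgroup_iso_subgroups(1)[OF f]] by auto
    then have "f (a \<otimes> inv t) = b \<otimes> inv (f t)"
      using subgroup_iso_mult[OF f a(1)] subgroup_iso_inv[OF f] a by simp
    then show ?thesis
      using t by (metis image_eqI)
  qed
  moreover have "finite (f ` T)" "f ` T \<subseteq> B"
    using T subgroup_iso_closed[OF f] by auto
  ultimately show ?thesis
    unfolding finite_index_def by blast
qed

lemma fin_index_subgroup_carrier: "fin_index_subgroup G (carrier G)"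
  unfolding fin_index_subgroup_iff finite_index_def
  by (auto intro!: exI[of _ "{\<one>}"] subgroup_self)

lemma fin_index_subgroup_Int:
  assumes "fin_index_subgroup G K" "fin_index_subgroup G L"
  shows "fin_index_subgroup G (K \<inter> L)"
proof -
  have K: "subgroup K G" "finite_index K (carrier G)" and L: "subgroup L G" "finite_index L (carrier G)"
    using assms unfolding fin_index_subgroup_iff by auto
  have "finite_index (K \<inter> L) (carrier G)"
    using finite_index_trans[OF subgroup.subset[OF L(1)] finite_index_restrict[OF K(1) L(1) K(2)] L(2)] .
  then show ?thesis
    unfolding fin_index_subgroup_iff using subgroups_Inter_pair[OF K(1) L(1)] by blast
qed

lemma fin_index_subgroup_image:
  assumes f: "subgroup_iso A B f" and B: "fin_index_subgroup G B"
    and C: "fin_index_subgroup G C" "C \<subseteq> A"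
  shows "fin_index_subgroup G (f ` C)"
proof -
  have C_sub: "subgroup C G" and A: "subgroup A G"
    using C subgroup_iso_subgroups[OF f] unfolding fin_index_subgroup_iff by auto
  have "finite_index C A"
    using finite_index_restrict[OF C_sub A] C unfolding fin_index_subgroup_iff
    by (simp add: Int_absorb2)
  then have "finite_index (f ` C) B"
    by (rule finite_index_image[OF f])
  moreover have "subgroup B G" "finite_index B (carrier G)"
    using B unfolding fin_index_subgroup_iff by auto
  ultimately show ?thesis
    unfolding fin_index_subgroup_iff
    using finite_index_trans subgroup.subset subgroup_iso_subgroups(2)[OF subgroup_iso_restrict[OF f C_sub C(2)]]
    by blast
qed

lemma fin_index_subgroup_preimage:
  assumes f: "subgroup_iso A B f" and A: "fin_index_subgroup G A"
    and C: "fin_index_subgroup G C" "C \<subseteq> B"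
  shows "fin_index_subgroup G {x\<in>A. f x \<in> C}"
  using fin_index_subgroup_image[OF subgroup_iso_inv_into[OF f] A C]
    subgroup_iso_preimage_eq[OF f C(2)] by simp

lemma fin_index_subgroup_nat_pow_mem:
  assumes K: "fin_index_subgroup G K" and x: "x \<in> carrier G"
  shows "\<exists>m>0. m \<le> card (rcosets K) \<and> x [^] (m::nat) \<in> K"
proof -
  have sg: "subgroup K G" and fin: "finite (rcosets K)"
    using K unfolding fin_index_subgroup_def by auto
  define n where "n = card (rcosets K)"
  define c where "c i = K #> x [^] (i::nat)" for i
  have "c ` {0..n} \<subseteq> rcosets K"
    unfolding c_def using x by (auto intro: rcosetsI[OF subgroup.subset[OF sg]])
  then have "\<not> inj_on c {0..n}"
    using card_inj_on_le[OF _ _ fin] unfolding n_def by fastforce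
  then obtain i j where ij: "i \<le> n" "j \<le> n" "i < j" "c i = c j"
    unfolding inj_on_def by (metis atLeastAtMost_iff linorder_neqE_nat)
  have xi: "x [^] i \<in> carrier G" and xj: "x [^] j \<in> carrier G"
    using x by auto
  have "x [^] j \<in> K #> x [^] i"
    using ij(4) rcos_self[OF xj sg] unfolding c_def by simp
  then have "x [^] j \<otimes> inv (x [^] i) \<in> K"
    using subgroup.rcos_module[OF sg is_group xi xj] by blast
  moreover have "x [^] j = x [^] (j - i) \<otimes> x [^] i"
    using nat_pow_mult[OF x, of "j - i" i] ij(3) by simp
  ultimately have "x [^] (j - i) \<in> K"
    using xi x by (simp add: m_assoc)
  moreover have "0 < j - i" "j - i \<le> card (rcosets K)"
    using ij unfolding n_def by auto
  ultimately show ?thesis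
    by blast
qed

section \<open>The abstract commensurator as a quotient\<close>

definition comm_class :: "'a set \<times> 'a set \<times> ('a \<Rightarrow> 'a) \<Rightarrow> ('a set \<times> 'a set \<times> ('a \<Rightarrow> 'a)) set" where
  "comm_class u = comm_rel G `` {u}"

definition comm_inverse :: "'a set \<times> 'a set \<times> ('a \<Rightarrow> 'a) \<Rightarrow> 'a set \<times> 'a set \<times> ('a \<Rightarrow> 'a)" where
  "comm_inverse u = (case u of (A, B, f) \<Rightarrow> (B, A, inv_into A f))"

lemma mem_comm_isos:
  "(A, B, f) \<in> comm_isos G \<longleftrightarrow>
     fin_index_subgroup G A \<and> fin_index_subgroup G B \<and> subgroup_iso A B f"
  unfolding comm_isos_def fin_index_subgroup_def
  using iso_subgroups_iff_subgroup_iso subgroup_iso_subgroups by auto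

lemma mem_comm_rel:
  "((A, B, f), (A', B', f')) \<in> comm_rel G \<longleftrightarrow>
     (A, B, f) \<in> comm_isos G \<and> (A', B', f') \<in> comm_isos G \<and>
     (\<exists>K. fin_index_subgroup G K \<and> K \<subseteq> A \<and> K \<subseteq> A' \<and> (\<forall>x\<in>K. f x = f' x))"
  unfolding comm_rel_def by auto

lemma id_mem_comm_isos: "(carrier G, carrier G, \<lambda>x. x) \<in> comm_isos G"
  unfolding mem_comm_isos subgroup_iso_def
  using fin_index_subgroup_carrier subgroup_self by (auto simp: bij_betw_def)

lemma comm_rel_equiv: "equiv (comm_isos G) (comm_rel G)"
proof (rule equivI)
  show "comm_rel G \<subseteq> comm_isos G \<times> comm_isos G"
    unfolding comm_rel_def by auto
  show "refl_on (comm_isos G) (comm_rel G)"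
  proof (rule refl_onI)
    show "(u, u) \<in> comm_rel G" if "u \<in> comm_isos G" for u
      using that by (cases u) (auto simp: mem_comm_rel mem_comm_isos)
  qed
  show "sym (comm_rel G)"
  proof (rule symI)
    show "(v, u) \<in> comm_rel G" if "(u, v) \<in> comm_rel G" for u v
      using that by (cases u, cases v) (auto simp: mem_comm_rel)
  qed
  show "trans (comm_rel G)"
  proof (rule transI)
    fix u v w
    assume uv: "(u, v) \<in> comm_rel G" and vw: "(v, w) \<in> comm_rel G"
    obtain A B f A' B' f' A'' B'' f'' where uvw: "u = (A, B, f)" "v = (A', B', f')" "w = (A'', B'', f'')"
      by (metis prod_cases3)
    obtain K K' where K: "fin_index_subgroup G K" "K \<subseteq> A" "K \<subseteq> A'" "\<forall>x\<in>K. f x = f' x"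
      and K': "fin_index_subgroup G K'" "K' \<subseteq> A'" "K' \<subseteq> A''" "\<forall>x\<in>K'. f' x = f'' x"
      using uv vw unfolding uvw mem_comm_rel by blast
    have "fin_index_subgroup G (K \<inter> K')"
      using fin_index_subgroup_Int[OF K(1) K'(1)] .
    then show "(u, w) \<in> comm_rel G"
      using uv vw K K' unfolding uvw mem_comm_rel by (intro conjI exI[of _ "K \<inter> K'"]) auto
  qed
qed

lemma comm_comp_closed:
  assumes "u \<in> comm_isos G" "v \<in> comm_isos G"
  shows "comm_comp u v \<in> comm_isos G"
proof -
  obtain A B f A' B' g where uv: "u = (A, B, f)" "v = (A', B', g)"
    by (metis prod_cases3)
  have u: "fin_index_subgroup G A" "fin_index_subgroup G B" "subgroup_iso A B f"
    and v: "fin_index_subgroup G A'" "fin_index_subgroup G B'" "subgroup_iso A' B' g"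
    using assms unfolding uv mem_comm_isos by auto
  have C: "fin_index_subgroup G (B \<inter> A')" and C_sub: "subgroup (B \<inter> A') G"
    using fin_index_subgroup_Int[OF u(2) v(1)] unfolding fin_index_subgroup_def by auto
  have "subgroup_iso {x\<in>A. f x \<in> B \<inter> A'} (g ` (B \<inter> A')) (g \<circ> f)"
    using subgroup_iso_comp[OF subgroup_iso_preimage[OF u(3) C_sub]
        subgroup_iso_restrict[OF v(3) C_sub]] by blast
  moreover have "fin_index_subgroup G {x\<in>A. f x \<in> B \<inter> A'}"
    using fin_index_subgroup_preimage[OF u(3) u(1) C] by blast
  moreover have "fin_index_subgroup G (g ` (B \<inter> A'))"
    using fin_index_subgroup_image[OF v(3) v(2) C] by blast
  ultimately show ?thesis
    unfolding uv comm_comp_def by (simp only: prod.case mem_comm_isos)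
qed

lemma comm_comp_cong:
  assumes "(u, u') \<in> comm_rel G" "(v, v') \<in> comm_rel G"
  shows "(comm_comp u v, comm_comp u' v') \<in> comm_rel G"
proof -
  obtain A B f A1 B1 f1 where uu: "u = (A, B, f)" "u' = (A1, B1, f1)"
    by (metis prod_cases3)
  obtain A' B' g A1' B1' g1 where vv: "v = (A', B', g)" "v' = (A1', B1', g1)"
    by (metis prod_cases3)
  have isos: "u \<in> comm_isos G" "u' \<in> comm_isos G" "v \<in> comm_isos G" "v' \<in> comm_isos G"
    using assms unfolding comm_rel_def by auto
  obtain K where K: "fin_index_subgroup G K" "K \<subseteq> A" "K \<subseteq> A1" "\<forall>x\<in>K. f x = f1 x"
    using assms(1) unfolding uu mem_comm_rel by blast
  obtain K' where K': "fin_index_subgroup G K'" "K' \<subseteq> A'" "K' \<subseteq> A1'" "\<forall>x\<in>K'. g x = g1 x"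
    using assms(2) unfolding vv mem_comm_rel by blast
  have u: "fin_index_subgroup G A" "fin_index_subgroup G B" "subgroup_iso A B f"
    and u1: "subgroup_iso A1 B1 f1"
    using isos unfolding uu mem_comm_isos by auto
  define L where "L = {x\<in>A. f x \<in> K' \<inter> B} \<inter> K"
  have "fin_index_subgroup G L"
    unfolding L_def using fin_index_subgroup_Int[OF fin_index_subgroup_preimage[OF u(3) u(1)
          fin_index_subgroup_Int[OF K'(1) u(2)]] K(1)] by blast
  moreover have "L \<subseteq> {x\<in>A. f x \<in> B \<inter> A'}" "L \<subseteq> {x\<in>A1. f1 x \<in> B1 \<inter> A1'}"
    unfolding L_def using K K' subgroup_iso_closed[OF u1] by auto
  moreover have "\<forall>x\<in>L. (g \<circ> f) x = (g1 \<circ> f1) x"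
    unfolding L_def using K K' by auto
  ultimately show ?thesis
    using comm_comp_closed[OF isos(1,3)] comm_comp_closed[OF isos(2,4)]
    unfolding uu vv comm_comp_def by (simp only: prod.case mem_comm_rel) blast
qed

lemma comm_inverse_closed: "u \<in> comm_isos G \<Longrightarrow> comm_inverse u \<in> comm_isos G"
  by (cases u) (auto simp: comm_inverse_def mem_comm_isos intro: subgroup_iso_inv_into)

lemma comm_comp_inverse:
  assumes u: "u \<in> comm_isos G"
  shows "(comm_comp u (comm_inverse u), (carrier G, carrier G, \<lambda>x. x)) \<in> comm_rel G"
    and "(comm_comp (comm_inverse u) u, (carrier G, carrier G, \<lambda>x. x)) \<in> comm_rel G"
proof -
  obtain A B f where uu: "u = (A, B, f)"
    by (metis prod_cases3)
  have A: "fin_index_subgroup G A" and B: "fin_index_subgroup G B"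
    and bij: "bij_betw f A B"
    using u unfolding uu mem_comm_isos by (auto dest: subgroup_iso_bij_betw)
  have eq: "comm_comp u (comm_inverse u) = ({x\<in>A. f x \<in> B}, inv_into A f ` B, inv_into A f \<circ> f)"
    unfolding uu comm_inverse_def comm_comp_def by simp
  moreover have "A \<subseteq> {x\<in>A. f x \<in> B}" "A \<subseteq> carrier G" "\<forall>x\<in>A. (inv_into A f \<circ> f) x = x"
    using bij A bij_betw_inv_into_left[OF bij]
    by (auto simp: fin_index_subgroup_def bij_betw_def dest: subgroup.mem_carrier)
  ultimately show "(comm_comp u (comm_inverse u), (carrier G, carrier G, \<lambda>x. x)) \<in> comm_rel G"
    using comm_comp_closed[OF u comm_inverse_closed[OF u]] id_mem_comm_isos A
    unfolding eq mem_comm_rel by (intro conjI exI[of _ A]) simp_all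
  have eq': "comm_comp (comm_inverse u) u = ({x\<in>B. inv_into A f x \<in> A}, f ` A, f \<circ> inv_into A f)"
    unfolding uu comm_inverse_def comm_comp_def by simp
  moreover have "B \<subseteq> {x\<in>B. inv_into A f x \<in> A}" "B \<subseteq> carrier G" "\<forall>x\<in>B. (f \<circ> inv_into A f) x = x"
    using bij B bij_betw_inv_into_right[OF bij]
    by (auto simp: fin_index_subgroup_def bij_betw_def inv_into_into dest: subgroup.mem_carrier)
  ultimately show "(comm_comp (comm_inverse u) u, (carrier G, carrier G, \<lambda>x. x)) \<in> comm_rel G"
    using comm_comp_closed[OF comm_inverse_closed[OF u] u] id_mem_comm_isos B
    unfolding eq' mem_comm_rel by (intro conjI exI[of _ B]) simp_all
qed

lemma comm_inverse_unique:
  assumes u: "u \<in> comm_isos G" and w: "w \<in> comm_isos G"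
    and uw: "(comm_comp u w, (carrier G, carrier G, \<lambda>x. x)) \<in> comm_rel G"
  shows "(w, comm_inverse u) \<in> comm_rel G"
proof -
  obtain A B f where uu: "u = (A, B, f)"
    by (metis prod_cases3)
  obtain A' B' g where ww: "w = (A', B', g)"
    by (metis prod_cases3)
  have f: "subgroup_iso A B f" and B: "fin_index_subgroup G B"
    using u unfolding uu mem_comm_isos by auto
  have eq: "comm_comp u w = ({x\<in>A. f x \<in> B \<inter> A'}, g ` (B \<inter> A'), g \<circ> f)"
    unfolding uu ww comm_comp_def by simp
  obtain K where K: "fin_index_subgroup G K" "K \<subseteq> {x\<in>A. f x \<in> B \<inter> A'}"
    and gf: "\<forall>x\<in>K. (g \<circ> f) x = x"
    using uw unfolding eq mem_comm_rel by blast
  have "fin_index_subgroup G (f ` K)"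
    using fin_index_subgroup_image[OF f B K(1)] K(2) by blast
  moreover have "f ` K \<subseteq> A'" "f ` K \<subseteq> B"
    using K(2) by auto
  moreover have "\<forall>y\<in>f ` K. g y = inv_into A f y"
  proof
    fix y
    assume "y \<in> f ` K"
    then obtain x where x: "x \<in> K" "y = f x"
      by blast
    then have "x \<in> A"
      using K(2) by blast
    then show "g y = inv_into A f y"
      using gf x subgroup_iso_bij_betw[OF f] by (simp add: bij_betw_def)
  qed
  ultimately show ?thesis
    using w comm_inverse_closed[OF u] unfolding uu ww comm_inverse_def prod.case mem_comm_rel
    by (intro conjI exI[of _ "f ` K"]) simp_all
qed

lemma comm_class_in_carrier: "u \<in> comm_isos G \<Longrightarrow> comm_class u \<in> carrier (Comm G)"
  unfolding Comm_def comm_class_def by (simp add: quotientI)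

lemma carrier_CommE:
  assumes "c \<in> carrier (Comm G)"
  obtains u where "u \<in> comm_isos G" "c = comm_class u"
  using assms unfolding Comm_def comm_class_def by (auto elim: quotientE)

lemma one_Comm: "\<one>\<^bsub>Comm G\<^esub> = comm_class (carrier G, carrier G, \<lambda>x. x)"
  unfolding Comm_def comm_class_def by simp

lemma comm_class_eq_iff:
  "u \<in> comm_isos G \<Longrightarrow> v \<in> comm_isos G \<Longrightarrow> comm_class u = comm_class v \<longleftrightarrow> (u, v) \<in> comm_rel G"
  unfolding comm_class_def using equiv_class_eq_iff[OF comm_rel_equiv] by blast

lemma mult_comm_class:
  assumes u: "u \<in> comm_isos G" and v: "v \<in> comm_isos G"
  shows "comm_class u \<otimes>\<^bsub>Comm G\<^esub> comm_class v = comm_class (comm_comp u v)"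
proof -
  have "comm_rel G `` {comm_comp a b |a b. a \<in> comm_class u \<and> b \<in> comm_class v} =
        comm_class (comm_comp u v)"
  proof
    show "comm_class (comm_comp u v) \<subseteq>
          comm_rel G `` {comm_comp a b |a b. a \<in> comm_class u \<and> b \<in> comm_class v}"
      unfolding comm_class_def using u v equiv_class_self[OF comm_rel_equiv] by blast
    show "comm_rel G `` {comm_comp a b |a b. a \<in> comm_class u \<and> b \<in> comm_class v} \<subseteq>
          comm_class (comm_comp u v)"
    proof
      fix y
      assume "y \<in> comm_rel G `` {comm_comp a b |a b. a \<in> comm_class u \<and> b \<in> comm_class v}"
      then obtain a b where "(u, a) \<in> comm_rel G" "(v, b) \<in> comm_rel G" "(comm_comp a b, y) \<in> comm_rel G"
        unfolding comm_class_def by blast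
      then have "(comm_comp u v, y) \<in> comm_rel G"
        using comm_comp_cong comm_rel_equiv by (meson equiv_def transD)
      then show "y \<in> comm_class (comm_comp u v)"
        unfolding comm_class_def by blast
    qed
  qed
  then show ?thesis
    unfolding Comm_def comm_mult_def by simp
qed

lemma inv_comm_class:
  assumes u: "u \<in> comm_isos G"
  shows "inv\<^bsub>Comm G\<^esub> comm_class u = comm_class (comm_inverse u)"
  unfolding m_inv_def
proof (rule the_equality)
  have u': "comm_inverse u \<in> comm_isos G"
    using comm_inverse_closed[OF u] .
  show "comm_class (comm_inverse u) \<in> carrier (Comm G) \<and>
        comm_class u \<otimes>\<^bsub>Comm G\<^esub> comm_class (comm_inverse u) = \<one>\<^bsub>Comm G\<^esub> \<and>
        comm_class (comm_inverse u) \<otimes>\<^bsub>Comm G\<^esub> comm_class u = \<one>\<^bsub>Comm G\<^esub>"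
    using comm_class_in_carrier[OF u'] mult_comm_class[OF u u'] mult_comm_class[OF u' u] one_Comm
      comm_comp_inverse[OF u] comm_class_eq_iff comm_comp_closed u u' id_mem_comm_isos by simp
next
  fix c
  assume c: "c \<in> carrier (Comm G) \<and> comm_class u \<otimes>\<^bsub>Comm G\<^esub> c = \<one>\<^bsub>Comm G\<^esub> \<and>
    c \<otimes>\<^bsub>Comm G\<^esub> comm_class u = \<one>\<^bsub>Comm G\<^esub>"
  then obtain w where w: "w \<in> comm_isos G" "c = comm_class w"
    by (auto elim: carrier_CommE)
  have "comm_class (comm_comp u w) = comm_class (carrier G, carrier G, \<lambda>x. x)"
    using c w mult_comm_class[OF u w(1)] one_Comm by simp
  then have "(comm_comp u w, (carrier G, carrier G, \<lambda>x. x)) \<in> comm_rel G"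
    using comm_class_eq_iff comm_comp_closed[OF u w(1)] id_mem_comm_isos by blast
  then show "c = comm_class (comm_inverse u)"
    using comm_inverse_unique[OF u w(1)] comm_class_eq_iff w comm_inverse_closed[OF u] by blast
qed

section \<open>Classes of isomorphisms between \<open>p\<close>-full subgroups\<close>

definition coprime_powers_in :: "nat \<Rightarrow> 'a set \<Rightarrow> bool" where
  "coprime_powers_in p A \<longleftrightarrow> (\<forall>x\<in>carrier G. \<exists>m. coprime m p \<and> x [^] m \<in> A)"

lemma coprime_powers_in_carrier: "coprime_powers_in p (carrier G)"
  unfolding coprime_powers_in_def by (metis coprime_1_left nat_pow_closed)

lemma coprime_powers_in_fin_index:
  assumes K: "fin_index_subgroup G K" and p: "Factorial_Ring.prime p" and index: "card (rcosets K) < p"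
  shows "coprime_powers_in p K"
  unfolding coprime_powers_in_def
proof
  fix x
  assume "x \<in> carrier G"
  then obtain m where m: "0 < m" "m \<le> card (rcosets K)" "x [^] m \<in> K"
    using fin_index_subgroup_nat_pow_mem[OF K] by blast
  then have "\<not> p dvd m"
    using index by (meson dvd_imp_le leD order_le_less_trans)
  then have "coprime m p"
    using prime_imp_coprime[OF p] by (simp add: coprime_commute)
  then show "\<exists>m. coprime m p \<and> x [^] m \<in> K"
    using m by blast
qed

lemma coprime_powers_in_Int:
  assumes A: "subgroup A G" "coprime_powers_in p A" and B: "coprime_powers_in p B"
  shows "coprime_powers_in p (A \<inter> B)"
  unfolding coprime_powers_in_def
proof
  fix x
  assume x: "x \<in> carrier G"
  obtain m where m: "coprime m p" "x [^] m \<in> A"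
    using A x unfolding coprime_powers_in_def by blast
  obtain m' where m': "coprime m' p" "(x [^] m) [^] m' \<in> B"
    using B x unfolding coprime_powers_in_def by blast
  have "x [^] (m * m') \<in> A \<inter> B"
    using subgroup_nat_pow_closed[OF A(1) m(2)] m'(2) nat_pow_pow[OF x] by simp
  moreover have "coprime (m * m') p"
    using m m' by simp
  ultimately show "\<exists>m. coprime m p \<and> x [^] m \<in> A \<inter> B"
    by blast
qed

lemma coprime_powers_in_image:
  assumes f: "subgroup_iso A B f" and B: "coprime_powers_in p B" and C: "coprime_powers_in p C"
  shows "coprime_powers_in p (f ` C)"
  unfolding coprime_powers_in_def
proof
  fix y
  assume y: "y \<in> carrier G"
  obtain m where m: "coprime m p" "y [^] m \<in> B"
    using B y unfolding coprime_powers_in_def by blast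
  then obtain a where a: "a \<in> A" "y [^] m = f a"
    using subgroup_iso_bij_betw[OF f] by (auto simp: bij_betw_def)
  then obtain m' where m': "coprime m' p" "a [^] m' \<in> C"
    using C subgroup.mem_carrier[OF subgroup_iso_subgroups(1)[OF f]] unfolding coprime_powers_in_def by blast
  have "f (a [^] m') = (y [^] m) [^] m'"
    using subgroup_iso_nat_pow[OF f a(1)] a(2) by simp
  also have "\<dots> = y [^] (m * m')"
    using nat_pow_pow[OF y] .
  finally have "y [^] (m * m') \<in> f ` C"
    using m'(2) by (metis image_eqI)
  moreover have "coprime (m * m') p"
    using m m' by simp
  ultimately show "\<exists>m. coprime m p \<and> y [^] m \<in> f ` C"
    by blast
qed

definition coprime_classes :: "nat \<Rightarrow> ('a set \<times> 'a set \<times> ('a \<Rightarrow> 'a)) set set" where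
  "coprime_classes p = {comm_class (A, B, f) | A B f.
      (A, B, f) \<in> comm_isos G \<and> coprime_powers_in p A \<and> coprime_powers_in p B}"

lemma one_coprime_classes: "\<one>\<^bsub>Comm G\<^esub> \<in> coprime_classes p"
  unfolding coprime_classes_def one_Comm using id_mem_comm_isos coprime_powers_in_carrier by blast

lemma mult_coprime_classes:
  assumes "c \<in> coprime_classes p" "d \<in> coprime_classes p"
  shows "c \<otimes>\<^bsub>Comm G\<^esub> d \<in> coprime_classes p"
proof -
  obtain A B f where c: "c = comm_class (A, B, f)" "(A, B, f) \<in> comm_isos G"
    and AB: "coprime_powers_in p A" "coprime_powers_in p B"
    using assms(1) unfolding coprime_classes_def by blast
  obtain A' B' g where d: "d = comm_class (A', B', g)" "(A', B', g) \<in> comm_isos G"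
    and AB': "coprime_powers_in p A'" "coprime_powers_in p B'"
    using assms(2) unfolding coprime_classes_def by blast
  have f: "subgroup_iso A B f" and g: "subgroup_iso A' B' g"
    using c(2) d(2) unfolding mem_comm_isos by auto
  have BA': "coprime_powers_in p (B \<inter> A')"
    using coprime_powers_in_Int[OF subgroup_iso_subgroups(2)[OF f] AB(2) AB'(1)] .
  have "{x\<in>A. f x \<in> B \<inter> A'} = inv_into A f ` (B \<inter> A')"
    using subgroup_iso_preimage_eq[OF f] by blast
  then have "coprime_powers_in p {x\<in>A. f x \<in> B \<inter> A'}"
    using coprime_powers_in_image[OF subgroup_iso_inv_into[OF f] AB(1) BA'] by simp
  moreover have "coprime_powers_in p (g ` (B \<inter> A'))"
    using coprime_powers_in_image[OF g AB'(2) BA'] .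
  ultimately show ?thesis
    using mult_comm_class[OF c(2) d(2)] comm_comp_closed[OF c(2) d(2)]
    unfolding c d coprime_classes_def comm_comp_def prod.case by blast
qed

lemma inv_coprime_classes:
  assumes "c \<in> coprime_classes p"
  shows "inv\<^bsub>Comm G\<^esub> c \<in> coprime_classes p"
proof -
  obtain A B f where c: "c = comm_class (A, B, f)" "(A, B, f) \<in> comm_isos G"
    and AB: "coprime_powers_in p A" "coprime_powers_in p B"
    using assms unfolding coprime_classes_def by blast
  then show ?thesis
    using inv_comm_class[OF c(2)] comm_inverse_closed[OF c(2)]
    unfolding coprime_classes_def comm_inverse_def prod.case by blast
qed

lemma generate_Comm_subset_coprime_classes:
  assumes "S \<subseteq> coprime_classes p"
  shows "generate (Comm G) S \<subseteq> coprime_classes p"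
proof
  fix c
  assume "c \<in> generate (Comm G) S"
  then show "c \<in> coprime_classes p"
    by induction
      (use assms one_coprime_classes inv_coprime_classes mult_coprime_classes in blast)+
qed

lemma eventually_in_coprime_classes:
  assumes "c \<in> carrier (Comm G)"
  shows "\<forall>\<^sub>F p in sequentially. Factorial_Ring.prime p \<longrightarrow> c \<in> coprime_classes p"
proof -
  obtain A B f where c: "(A, B, f) \<in> comm_isos G" "c = comm_class (A, B, f)"
    using assms by (metis carrier_CommE prod_cases3)
  have AB: "fin_index_subgroup G A" "fin_index_subgroup G B"
    using c(1) unfolding mem_comm_isos by auto
  have "c \<in> coprime_classes p"
    if p: "Factorial_Ring.prime p" and large: "card (rcosets A) + card (rcosets B) < p" for p
  proof -
    have "coprime_powers_in p A" "coprime_powers_in p B"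
      using coprime_powers_in_fin_index[OF AB(1) p] coprime_powers_in_fin_index[OF AB(2) p] large
      by auto
    then show ?thesis
      using c unfolding coprime_classes_def by blast
  qed
  then show ?thesis
    by (intro eventually_sequentiallyI[of "Suc (card (rcosets A) + card (rcosets B))"]) auto
qed

section \<open>Extending automorphisms of a normal subgroup of prime index\<close>

lemma unique_rootD:
  "unique_root G \<Longrightarrow> x \<in> carrier G \<Longrightarrow> y \<in> carrier G \<Longrightarrow> 0 < n \<Longrightarrow> x [^] (n::nat) = y [^] n \<Longrightarrow> x = y"
  unfolding unique_root_def by blast

lemma inv_mult_eq_mult_inv_iff:
  assumes "x \<in> carrier G" "y \<in> carrier G" "z \<in> carrier G" "w \<in> carrier G"
  shows "inv x \<otimes> y = z \<otimes> inv w \<longleftrightarrow> y \<otimes> w = x \<otimes> z"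
proof -
  have "inv x \<otimes> y = z \<otimes> inv w \<longleftrightarrow> y = x \<otimes> (z \<otimes> inv w)"
    using assms inv_solve_left' by simp
  also have "\<dots> \<longleftrightarrow> y \<otimes> w = x \<otimes> z"
    using assms by (metis inv_solve_right' m_assoc m_closed inv_closed)
  finally show ?thesis .
qed

lemma nat_pow_index_mem_normal:
  assumes H: "H \<lhd> G" and x: "x \<in> carrier G"
  shows "x [^] card (rcosets H) \<in> H"
proof -
  interpret H: normal H G
    by (rule H)
  have "carrier (G Mod H) = rcosets H"
    unfolding carrier_FactGroup RCOSETS_def by auto
  then have "(H #> x) [^]\<^bsub>G Mod H\<^esub> card (rcosets H) = \<one>\<^bsub>G Mod H\<^esub>"
    using group.pow_order_eq_1[OF H.factorgroup_is_group] x rcosetsI[OF H.subset]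
    unfolding order_def by metis
  then have "H #> x [^] card (rcosets H) = H"
    using H.FactGroup_pow[OF x] by simp
  then show ?thesis
    using coset_join1[OF _ _ normal_imp_subgroup[OF H]] x by simp
qed

lemma coprime_powers_pos:
  assumes "coprime_powers_in p A" "Factorial_Ring.prime p" "x \<in> carrier G"
  obtains m where "0 < m" "coprime m p" "x [^] m \<in> A"
proof -
  obtain m where m: "coprime m p" "x [^] m \<in> A"
    using assms(1,3) unfolding coprime_powers_in_def by blast
  moreover have "m \<noteq> 0"
  proof
    assume "m = 0"
    then have "p = 1"
      using m(1) by simp
    then show False
      using assms(2) by simp
  qed
  ultimately show ?thesis
    using that by blast
qed

lemma normal_prime_index_mult_decomp:
  assumes H: "H \<lhd> G" "card (rcosets H) = p" "Factorial_Ring.prime p"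
    and A: "subgroup A G" "coprime_powers_in p A" and x: "x \<in> carrier G"
  shows "\<exists>h\<in>H. \<exists>a\<in>A. x = h \<otimes> a"
proof -
  obtain m where m: "0 < m" "coprime m p" "x [^] m \<in> A"
    using coprime_powers_pos[OF A(2) H(3) x] .
  obtain k y where "m * k = p * y + gcd m p"
    using bezout_nat[of m p] m(1) by blast
  then have bezout: "m * k = p * y + 1"
    using m(2) by simp
  have sub: "subgroup H G"
    using normal_imp_subgroup[OF H(1)] .
  \<comment> \<open>\<open>x = (x\<^sup>p)\<^sup>-\<^sup>y (x\<^sup>m)\<^sup>k\<close> with \<open>x\<^sup>p \<in> H\<close> and \<open>x\<^sup>m \<in> A\<close>\<close>
  define h where "h = inv ((x [^] p) [^] y)"
  define a where "a = (x [^] m) [^] k"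
  have "h \<in> H"
    unfolding h_def using nat_pow_index_mem_normal[OF H(1) x] H(2)
    by (simp add: subgroup.m_inv_closed[OF sub] subgroup_nat_pow_closed[OF sub])
  moreover have "a \<in> A"
    unfolding a_def using subgroup_nat_pow_closed[OF A(1) m(3)] .
  moreover have "a = x [^] (p * y) \<otimes> x"
    unfolding a_def using x bezout nat_pow_pow[OF x] nat_pow_mult[OF x, of "p * y" 1] by simp
  then have "h \<otimes> a = x"
    unfolding h_def using x nat_pow_pow[OF x] by (simp add: m_assoc[symmetric])
  ultimately show ?thesis
    by metis
qed

context
  fixes H p \<phi> A B \<psi> K
  assumes unique_root: "unique_root G"
    and H: "H \<lhd> G" "card (rcosets H) = p" and p: "Factorial_Ring.prime p"
    and \<phi>: "subgroup_iso H H \<phi>" and \<psi>: "subgroup_iso A B \<psi>"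
    and A: "coprime_powers_in p A" and B: "coprime_powers_in p B"
    and K: "fin_index_subgroup G K" and agree: "\<forall>x\<in>K. \<phi> x = \<psi> x"
begin

lemma
  H_sub: "subgroup H G" and A_sub: "subgroup A G" and B_sub: "subgroup B G"
  using normal_imp_subgroup[OF H(1)] subgroup_iso_subgroups[OF \<psi>] by auto

lemma agree_on_Int: "x \<in> A \<Longrightarrow> x \<in> H \<Longrightarrow> \<phi> x = \<psi> x"
proof -
  assume x: "x \<in> A" "x \<in> H"
  obtain n :: nat where n: "0 < n" "x [^] n \<in> K"
    using fin_index_subgroup_nat_pow_mem[OF K] subgroup.mem_carrier[OF A_sub x(1)] by blast
  have "\<phi> x [^] n = \<phi> (x [^] n)"
    using subgroup_iso_nat_pow[OF \<phi> x(2)] by simp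
  also have "\<dots> = \<psi> (x [^] n)"
    using agree n by blast
  also have "\<dots> = \<psi> x [^] n"
    using subgroup_iso_nat_pow[OF \<psi> x(1)] .
  finally show ?thesis
    using unique_rootD[OF unique_root _ _ n(1)] subgroup_iso_carrier[OF \<phi> x(2)]
      subgroup_iso_carrier[OF \<psi> x(1)] by blast
qed

lemma agree_on_conj:
  assumes a: "a \<in> A" and h: "h \<in> H"
  shows "\<phi> (a \<otimes> h \<otimes> inv a) = \<psi> a \<otimes> \<phi> h \<otimes> inv (\<psi> a)"
proof -
  have G: "a \<in> carrier G" "h \<in> carrier G" "\<psi> a \<in> carrier G" "\<phi> h \<in> carrier G"
    using subgroup.mem_carrier[OF A_sub a] subgroup.mem_carrier[OF H_sub h]
      subgroup_iso_carrier[OF \<psi> a] subgroup_iso_carrier[OF \<phi> h] by auto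
  obtain n :: nat where n: "0 < n" "h [^] n \<in> A"
    using coprime_powers_pos[OF A p G(2)] by blast
  have hn: "h [^] n \<in> H"
    using subgroup_nat_pow_closed[OF H_sub h] .
  have ia: "inv a \<in> A"
    using subgroup.m_inv_closed[OF A_sub a] .
  have conj: "a \<otimes> h \<otimes> inv a \<in> H" "a \<otimes> h [^] n \<otimes> inv a \<in> H"
    using normal.inv_op_closed2[OF H(1) G(1)] h hn by auto
  have "a \<otimes> h [^] n \<otimes> inv a \<in> A"
    using a n(2) ia A_sub by (simp add: subgroup.m_closed)
  have "\<phi> (a \<otimes> h \<otimes> inv a) [^] n = \<phi> ((a \<otimes> h \<otimes> inv a) [^] n)"
    using subgroup_iso_nat_pow[OF \<phi> conj(1)] by simp
  also have "\<dots> = \<phi> (a \<otimes> h [^] n \<otimes> inv a)"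
    using conj_nat_pow[OF G(1,2)] by simp
  also have "\<dots> = \<psi> (a \<otimes> h [^] n \<otimes> inv a)"
    using agree_on_Int[OF \<open>a \<otimes> h [^] n \<otimes> inv a \<in> A\<close> conj(2)] .
  also have "\<dots> = \<psi> a \<otimes> \<phi> (h [^] n) \<otimes> inv (\<psi> a)"
    using subgroup_iso_mult[OF \<psi>] subgroup.m_closed[OF A_sub a n(2)] a n(2) ia
      agree_on_Int[OF n(2) hn] subgroup_iso_inv[OF \<psi> a] by simp
  also have "\<dots> = (\<psi> a \<otimes> \<phi> h \<otimes> inv (\<psi> a)) [^] n"
    using subgroup_iso_nat_pow[OF \<phi> h] conj_nat_pow[OF G(3,4)] by simp
  finally show ?thesis
    using unique_rootD[OF unique_root _ _ n(1)] subgroup_iso_carrier[OF \<phi> conj(1)] G by simp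
qed

lemma agree_on_products:
  assumes "h \<in> H" "a \<in> A" "h' \<in> H" "a' \<in> A" "h \<otimes> a = h' \<otimes> a'"
  shows "\<phi> h \<otimes> \<psi> a = \<phi> h' \<otimes> \<psi> a'"
proof -
  have G: "h \<in> carrier G" "a \<in> carrier G" "h' \<in> carrier G" "a' \<in> carrier G"
    using assms subgroup.mem_carrier[OF H_sub] subgroup.mem_carrier[OF A_sub] by auto
  have "inv h' \<otimes> h = a' \<otimes> inv a"
    using inv_mult_eq_mult_inv_iff[OF G(3,1,4,2)] assms(5) by simp
  moreover have "inv h' \<otimes> h \<in> H" "a' \<otimes> inv a \<in> A"
    using assms H_sub A_sub by (auto simp: subgroup.m_closed subgroup.m_inv_closed)
  ultimately have "\<phi> (inv h' \<otimes> h) = \<psi> (a' \<otimes> inv a)"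
    using agree_on_Int by simp
  then have "inv (\<phi> h') \<otimes> \<phi> h = \<psi> a' \<otimes> inv (\<psi> a)"
    using assms subgroup_iso_mult subgroup_iso_inv \<phi> \<psi> H_sub A_sub
    by (simp add: subgroup.m_inv_closed)
  then show ?thesis
    using inv_mult_eq_mult_inv_iff subgroup_iso_carrier[OF \<phi>] subgroup_iso_carrier[OF \<psi>] assms
    by simp
qed

definition extension :: "'a \<Rightarrow> 'a" where
  "extension x = (let d = SOME d. fst d \<in> H \<and> snd d \<in> A \<and> x = fst d \<otimes> snd d in \<phi> (fst d) \<otimes> \<psi> (snd d))"

lemma extension_mult:
  assumes "h \<in> H" "a \<in> A"
  shows "extension (h \<otimes> a) = \<phi> h \<otimes> \<psi> a"
proof -
  define d where "d = (SOME d. fst d \<in> H \<and> snd d \<in> A \<and> h \<otimes> a = fst d \<otimes> snd d)"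
  have "\<exists>d. fst d \<in> H \<and> snd d \<in> A \<and> h \<otimes> a = fst d \<otimes> snd d"
    using assms by (intro exI[of _ "(h, a)"]) simp
  then have d: "fst d \<in> H" "snd d \<in> A" "h \<otimes> a = fst d \<otimes> snd d"
    unfolding d_def by (metis (mono_tags, lifting) someI_ex)+
  have "extension (h \<otimes> a) = \<phi> (fst d) \<otimes> \<psi> (snd d)"
    unfolding extension_def d_def Let_def ..
  also have "\<dots> = \<phi> h \<otimes> \<psi> a"
    using agree_on_products[OF assms d(1,2,3)] by simp
  finally show ?thesis .
qed

lemma extension_on_normal: "h \<in> H \<Longrightarrow> extension h = \<phi> h"
  using extension_mult[of h \<one>] subgroup.one_closed[OF A_sub] subgroup.mem_carrier[OF H_sub]
    subgroup_iso_one[OF \<psi>] subgroup_iso_carrier[OF \<phi>] by simp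

lemma extension_hom: "extension \<in> hom G G"
proof (rule homI)
  fix x
  assume "x \<in> carrier G"
  then show "extension x \<in> carrier G"
    using normal_prime_index_mult_decomp[OF H p A_sub A] extension_mult
      subgroup_iso_carrier[OF \<phi>] subgroup_iso_carrier[OF \<psi>] by (metis m_closed)
next
  fix x y
  assume "x \<in> carrier G" "y \<in> carrier G"
  then obtain h a h' a' where ha: "h \<in> H" "a \<in> A" "x = h \<otimes> a" and ha': "h' \<in> H" "a' \<in> A" "y = h' \<otimes> a'"
    using normal_prime_index_mult_decomp[OF H p A_sub A] by metis
  have G: "h \<in> carrier G" "a \<in> carrier G" "h' \<in> carrier G" "a' \<in> carrier G"
    using ha ha' subgroup.mem_carrier[OF H_sub] subgroup.mem_carrier[OF A_sub] by auto
  have G': "\<phi> h \<in> carrier G" "\<psi> a \<in> carrier G" "\<phi> h' \<in> carrier G" "\<psi> a' \<in> carrier G"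
    using ha ha' subgroup_iso_carrier[OF \<phi>] subgroup_iso_carrier[OF \<psi>] by auto
  have conj: "a \<otimes> h' \<otimes> inv a \<in> H"
    using normal.inv_op_closed2[OF H(1) G(2) ha'(1)] .
  have "x \<otimes> y = (h \<otimes> (a \<otimes> h' \<otimes> inv a)) \<otimes> (a \<otimes> a')"
    using ha ha' G by (simp add: m_assoc) (simp add: m_assoc[symmetric])
  then have "extension (x \<otimes> y) = \<phi> (h \<otimes> (a \<otimes> h' \<otimes> inv a)) \<otimes> \<psi> (a \<otimes> a')"
    using extension_mult subgroup.m_closed[OF H_sub ha(1) conj] subgroup.m_closed[OF A_sub ha(2) ha'(2)]
    by simp
  also have "\<dots> = \<phi> h \<otimes> (\<psi> a \<otimes> \<phi> h' \<otimes> inv (\<psi> a)) \<otimes> (\<psi> a \<otimes> \<psi> a')"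
    using subgroup_iso_mult[OF \<phi> ha(1) conj] subgroup_iso_mult[OF \<psi> ha(2) ha'(2)]
      agree_on_conj[OF ha(2) ha'(1)] by simp
  also have "\<dots> = (\<phi> h \<otimes> \<psi> a) \<otimes> (\<phi> h' \<otimes> \<psi> a')"
    using G' by (simp add: m_assoc) (simp add: m_assoc[symmetric])
  also have "\<dots> = extension x \<otimes> extension y"
    using extension_mult ha ha' by simp
  finally show "extension (x \<otimes> y) = extension x \<otimes> extension y" .
qed

lemma extension_iso: "extension \<in> iso G G"
proof -
  have hom: "group_hom G G extension"
    using extension_hom is_group by (simp add: group_hom_def group_hom_axioms_def)
  have "carrier G \<subseteq> extension ` carrier G"
  proof
    fix y
    assume "y \<in> carrier G"
    then obtain h b where hb: "h \<in> H" "b \<in> B" "y = h \<otimes> b"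
      using normal_prime_index_mult_decomp[OF H p B_sub B] by blast
    obtain h0 where "h0 \<in> H" "h = \<phi> h0"
      using hb(1) subgroup_iso_bij_betw[OF \<phi>] unfolding bij_betw_def by blast
    moreover obtain a0 where "a0 \<in> A" "b = \<psi> a0"
      using hb(2) subgroup_iso_bij_betw[OF \<psi>] unfolding bij_betw_def by blast
    moreover have "h0 \<otimes> a0 \<in> carrier G"
      using calculation subgroup.mem_carrier[OF H_sub] subgroup.mem_carrier[OF A_sub] by blast
    ultimately show "y \<in> extension ` carrier G"
      using extension_mult hb(3) by (metis image_eqI)
  qed
  moreover have "x = \<one>" if x: "x \<in> carrier G" "extension x = \<one>" for x
  proof -
    have xp: "x [^] p \<in> H"
      using nat_pow_index_mem_normal[OF H(1) x(1)] H(2) by simp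
    have "\<phi> (x [^] p) = \<phi> \<one>"
      using group_hom.hom_nat_pow[OF hom x(1)] x(2) extension_on_normal[OF xp] subgroup_iso_one[OF \<phi>]
      by simp
    then have "x [^] p = \<one> [^] p"
      using subgroup_iso_bij_betw[OF \<phi>] xp subgroup.one_closed[OF H_sub]
      unfolding bij_betw_def using inj_onD[of \<phi> H "x [^] p" \<one>] by simp
    then show "x = \<one>"
      using unique_rootD[OF unique_root x(1) one_closed] prime_gt_0_nat[OF p] by blast
  qed
  ultimately show ?thesis
    using group_hom.iso_iff[OF hom] by blast
qed

end

lemma normal_prime_index_aut_mem_comm_isos:
  assumes H: "H \<lhd> G" "card (rcosets H) = p" and p: "Factorial_Ring.prime p"
    and \<phi>: "\<phi> \<in> iso (G\<lparr>carrier := H\<rparr>) (G\<lparr>carrier := H\<rparr>)"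
  shows "(H, H, \<phi>) \<in> comm_isos G"
proof -
  have "finite (rcosets H)"
    using H(2) p by (metis card.infinite not_prime_0)
  then show ?thesis
    using normal_imp_subgroup[OF H(1)] \<phi> iso_subgroups_iff_subgroup_iso
    unfolding mem_comm_isos fin_index_subgroup_def by blast
qed

lemma extends_if_coprime_class:
  assumes unique_root: "unique_root G"
    and H: "H \<lhd> G" "card (rcosets H) = p" and p: "Factorial_Ring.prime p"
    and \<phi>: "\<phi> \<in> iso (G\<lparr>carrier := H\<rparr>) (G\<lparr>carrier := H\<rparr>)"
    and coprime: "comm_class (H, H, \<phi>) \<in> coprime_classes p"
  shows "\<exists>\<Psi>\<in>iso G G. \<forall>x\<in>H. \<Psi> x = \<phi> x"
proof -
  have \<phi>_mem: "(H, H, \<phi>) \<in> comm_isos G"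
    using normal_prime_index_aut_mem_comm_isos[OF H p \<phi>] .
  obtain A B \<psi> where \<psi>: "(A, B, \<psi>) \<in> comm_isos G" "comm_class (H, H, \<phi>) = comm_class (A, B, \<psi>)"
    and AB: "coprime_powers_in p A" "coprime_powers_in p B"
    using coprime unfolding coprime_classes_def by blast
  then have "((H, H, \<phi>), (A, B, \<psi>)) \<in> comm_rel G"
    using comm_class_eq_iff \<phi>_mem by blast
  then obtain K where K: "fin_index_subgroup G K" "\<forall>x\<in>K. \<phi> x = \<psi> x"
    unfolding mem_comm_rel by blast
  have "subgroup_iso H H \<phi>" "subgroup_iso A B \<psi>"
    using \<phi>_mem \<psi>(1) unfolding mem_comm_isos by auto
  note extension = this AB K
  show ?thesis
    using extension_iso[OF unique_root H p extension] extension_on_normal[OF unique_root H p extension]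
    by blast
qed

end

theorem theorem2p7:
  fixes G :: "('a, 'b) monoid_scheme"
  assumes "group G"
    and "unique_root G"
    and "infinite {p::nat. Factorial_Ring.prime p \<and>
           (\<exists>H. H \<lhd> G \<and> card (rcosets\<^bsub>G\<^esub> H) = p \<and>
              (\<exists>\<phi> \<in> iso (G\<lparr>carrier := H\<rparr>) (G\<lparr>carrier := H\<rparr>).
                 \<not> (\<exists>\<psi> \<in> iso G G. \<forall>x\<in>H. \<psi> x = \<phi> x)))}"
  shows "\<not> finitely_generated_group (Comm G)"
proof
  interpret group G by fact
  define bad where "bad p \<longleftrightarrow> (\<exists>H. H \<lhd> G \<and> card (rcosets\<^bsub>G\<^esub> H) = p \<and>
    (\<exists>\<phi> \<in> iso (G\<lparr>carrier := H\<rparr>) (G\<lparr>carrier := H\<rparr>). \<not> (\<exists>\<psi> \<in> iso G G. \<forall>x\<in>H. \<psi> x = \<phi> x)))" for p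
  assume "finitely_generated_group (Comm G)"
  then obtain S where S: "finite S" "S \<subseteq> carrier (Comm G)" "generate (Comm G) S = carrier (Comm G)"
    unfolding finitely_generated_group_def by blast
  have "\<forall>\<^sub>F p in sequentially. \<forall>c\<in>S. Factorial_Ring.prime p \<longrightarrow> c \<in> coprime_classes p"
    using eventually_in_coprime_classes S(2) by (intro eventually_ball_finite[OF S(1)]) blast
  then have ev: "\<forall>\<^sub>F p in sequentially. Factorial_Ring.prime p \<and> bad p \<longrightarrow>
      Factorial_Ring.prime p \<and> S \<subseteq> coprime_classes p \<and> bad p"
    by (rule eventually_mono) blast
  have freq: "\<exists>\<^sub>F p in sequentially. Factorial_Ring.prime p \<and> bad p"
    using assms(3) unfolding bad_def cofinite_eq_sequentially[symmetric] frequently_cofinite .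
  from frequently_ex[OF frequently_rev_mp[OF freq ev]] obtain p
    where "Factorial_Ring.prime p \<and> S \<subseteq> coprime_classes p \<and> bad p" ..
  then obtain H \<phi> where p: "Factorial_Ring.prime p" "S \<subseteq> coprime_classes p"
    and H: "H \<lhd> G" "card (rcosets\<^bsub>G\<^esub> H) = p" and \<phi>: "\<phi> \<in> iso (G\<lparr>carrier := H\<rparr>) (G\<lparr>carrier := H\<rparr>)"
    and not_extends: "\<not> (\<exists>\<psi> \<in> iso G G. \<forall>x\<in>H. \<psi> x = \<phi> x)"
    unfolding bad_def by blast
  have "comm_class (H, H, \<phi>) \<in> carrier (Comm G)"
    using comm_class_in_carrier[OF normal_prime_index_aut_mem_comm_isos[OF H p(1) \<phi>]] .
  then have "comm_class (H, H, \<phi>) \<in> coprime_classes p"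
    using generate_Comm_subset_coprime_classes[OF p(2)] S(3) by blast
  then show False
    using extends_if_coprime_class[OF assms(2) H p(1) \<phi>] not_extends by blast
qed

end
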